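(* Let $r\ge 1$ and $K\ge 1$ be integers, $\beta_1,\beta_2>0$, $\alpha_2>0$ and $\theta_1,\theta_2>0$. Let $\zeta=(1,0,0)$, $\eta=(0,0,1)$, $v'=(0,1,0)$, and for $i=1,\dots,r$ let $k_i=2^{i-1}K\zeta$ and $k_i'=k_i+\eta$. Define \[ E_1(x,t)=-\frac{r^{-\beta_1-\beta_2}}{2}\sum_{\substack{i,j=1\\ i\ne j}}^r|k_i|^{\theta_1}|k_j'|^{\theta_2}e^{-(|k_i|^{2\alpha_2}+|k_j'|^{2\alpha_2})t}\sin((k_j'-k_i)\cdot x)\,v', \] \[ E_2(x,t)=-\frac{r^{-\beta_1-\beta_2}}{2}\sum_{i=1}^r\sum_{j=1}^r|k_i|^{\theta_1}|k_j'|^{\theta_2}e^{-(|k_i|^{2\alpha_2}+|k_j'|^{2\alpha_2})t}\sin((k_j'+k_i)\cdot x)\,v', \] and for $m=1,2$ \[ b_{1m}(x,t)=\int_0^t e^{-(t-\tau)(-\Delta)^{\alpha_2}}E_m(x,\tau)\,d\tau . \] Then for all $t>0$, \[ \|b_{11}(\cdot,t)\|_{L^\infty}+\|b_{12}(\cdot,t)\|_{L^\infty}\lesssim r^{-\beta_1-\beta_2}\,t^{1-\frac{\theta_1+\theta_2}{2\alpha_2}}, \] with implicit constant independent of $r$, $K$ and $t$.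
   Context: $e^{-t(-\Delta)^\alpha}$ is the fractional heat semigroup (Fourier multiplier $e^{-t|\xi|^{2\alpha}}$); in particular $e^{-t(-\Delta)^\alpha}\big(w\sin(k\cdot x)\big)=e^{-|k|^{2\alpha}t}w\sin(k\cdot x)$. *)

theory Defs
  imports "HOL-Analysis.Analysis"
begin

definition zeta :: "real^3" where "zeta = vector [1, 0, 0]"
definition eta :: "real^3" where "eta = vector [0, 0, 1]"
definition vprime :: "real^3" where "vprime = vector [0, 1, 0]"

definition kvec :: "nat \<Rightarrow> nat \<Rightarrow> real^3" where
  "kvec K i = (2 ^ (i - 1) * real K) *\<^sub>R zeta"
definition kvec' :: "nat \<Rightarrow> nat \<Rightarrow> real^3" where
  "kvec' K i = kvec K i + eta"

definition sine_series :: "'p set \<Rightarrow> ('p \<Rightarrow> real) \<Rightarrow> ('p \<Rightarrow> real^3) \<Rightarrow> real^3 \<Rightarrow> real" where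
  "sine_series I c q x = (\<Sum>p\<in>I. c p * sin (q p \<bullet> x))"

text \<open>Fractional heat semigroup e^{-s(-Delta)^alpha} applied to the sine series
  with coefficients c and frequencies q: Fourier multiplier e^{-s|xi|^(2 alpha)},
  i.e. each mode sin(q.x) is multiplied by e^{-|q|^(2 alpha) s}.\<close>
definition frac_heat_sine ::
  "real \<Rightarrow> real \<Rightarrow> 'p set \<Rightarrow> ('p \<Rightarrow> real) \<Rightarrow> ('p \<Rightarrow> real^3) \<Rightarrow> real^3 \<Rightarrow> real" where
  "frac_heat_sine \<alpha> s I c q x =
     sine_series I (\<lambda>p. exp (- (norm (q p) powr (2 * \<alpha>)) * s) * c p) q x"

definition Ecoef :: "real \<Rightarrow> real \<Rightarrow> real \<Rightarrow> real \<Rightarrow> real \<Rightarrow> nat \<Rightarrow> nat \<Rightarrow> real \<Rightarrow> nat \<times> nat \<Rightarrow> real" where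
  "Ecoef \<beta>1 \<beta>2 \<alpha>2 \<theta>1 \<theta>2 r K \<tau> ij =
     (case ij of (i, j) \<Rightarrow>
       - (real r powr (- \<beta>1 - \<beta>2) / 2) * norm (kvec K i) powr \<theta>1 * norm (kvec' K j) powr \<theta>2
       * exp (- (norm (kvec K i) powr (2 * \<alpha>2) + norm (kvec' K j) powr (2 * \<alpha>2)) * \<tau>))"

definition I1 :: "nat \<Rightarrow> (nat \<times> nat) set" where
  "I1 r = {(i, j). i \<in> {1..r} \<and> j \<in> {1..r} \<and> i \<noteq> j}"
definition I2 :: "nat \<Rightarrow> (nat \<times> nat) set" where
  "I2 r = {1..r} \<times> {1..r}"

definition q1 :: "nat \<Rightarrow> nat \<times> nat \<Rightarrow> real^3" where
  "q1 K ij = (case ij of (i, j) \<Rightarrow> kvec' K j - kvec K i)"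
definition q2 :: "nat \<Rightarrow> nat \<times> nat \<Rightarrow> real^3" where
  "q2 K ij = (case ij of (i, j) \<Rightarrow> kvec' K j + kvec K i)"

definition E1 :: "real \<Rightarrow> real \<Rightarrow> real \<Rightarrow> real \<Rightarrow> real \<Rightarrow> nat \<Rightarrow> nat \<Rightarrow> real^3 \<Rightarrow> real \<Rightarrow> real^3" where
  "E1 \<beta>1 \<beta>2 \<alpha>2 \<theta>1 \<theta>2 r K x \<tau> =
     sine_series (I1 r) (Ecoef \<beta>1 \<beta>2 \<alpha>2 \<theta>1 \<theta>2 r K \<tau>) (q1 K) x *\<^sub>R vprime"
definition E2 :: "real \<Rightarrow> real \<Rightarrow> real \<Rightarrow> real \<Rightarrow> real \<Rightarrow> nat \<Rightarrow> nat \<Rightarrow> real^3 \<Rightarrow> real \<Rightarrow> real^3" where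
  "E2 \<beta>1 \<beta>2 \<alpha>2 \<theta>1 \<theta>2 r K x \<tau> =
     sine_series (I2 r) (Ecoef \<beta>1 \<beta>2 \<alpha>2 \<theta>1 \<theta>2 r K \<tau>) (q2 K) x *\<^sub>R vprime"

text \<open>b_{1m}(x,t) = int_0^t e^{-(t-tau)(-Delta)^alpha2} E_m(x,tau) dtau, the semigroup
  acting on the sine series defining E_m(.,tau) (vector factor v' is constant).\<close>
definition b11 :: "real \<Rightarrow> real \<Rightarrow> real \<Rightarrow> real \<Rightarrow> real \<Rightarrow> nat \<Rightarrow> nat \<Rightarrow> real^3 \<Rightarrow> real \<Rightarrow> real^3" where
  "b11 \<beta>1 \<beta>2 \<alpha>2 \<theta>1 \<theta>2 r K x t =
     integral {0..t} (\<lambda>\<tau>. frac_heat_sine \<alpha>2 (t - \<tau>) (I1 r)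
        (Ecoef \<beta>1 \<beta>2 \<alpha>2 \<theta>1 \<theta>2 r K \<tau>) (q1 K) x *\<^sub>R vprime)"
definition b12 :: "real \<Rightarrow> real \<Rightarrow> real \<Rightarrow> real \<Rightarrow> real \<Rightarrow> nat \<Rightarrow> nat \<Rightarrow> real^3 \<Rightarrow> real \<Rightarrow> real^3" where
  "b12 \<beta>1 \<beta>2 \<alpha>2 \<theta>1 \<theta>2 r K x t =
     integral {0..t} (\<lambda>\<tau>. frac_heat_sine \<alpha>2 (t - \<tau>) (I2 r)
        (Ecoef \<beta>1 \<beta>2 \<alpha>2 \<theta>1 \<theta>2 r K \<tau>) (q2 K) x *\<^sub>R vprime)"

text \<open>L^infinity norm in x (the functions are continuous, so ess sup = sup).\<close>
definition Linf :: "(real^3 \<Rightarrow> real^3) \<Rightarrow> real" where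
  "Linf f = (SUP x. norm (f x))"

end

theory Submission
  imports Defs
begin

(*
  Each mode of b_{1m} couples frequencies k_i and k_j' through a frequency q with
  |q| >= max(|k_i|, |k_j|)/2; for q = k_j' - k_i this needs i <> j and the lacunarity
  |k_{i+1}| = 2|k_i|.  Hence, uniformly in tau in [0,t], the semigroup factor
  e^{-|q|^{2 alpha}(t - tau)} times the decay e^{-(|k_i|^{2 alpha} + |k_j'|^{2 alpha}) tau} of E_m
  is at most e^{-kappa (|k_i|^{2 alpha} + |k_j|^{2 alpha}) t} with kappa = 2^{-2 alpha}/2, and the
  double sum over modes factorises into two sums S_theta(t) = sum_i |k_i|^theta e^{-kappa |k_i|^{2 alpha} t}.
  With z_i = |k_i|^theta t^{theta/(2 alpha)}, which grows geometrically in i, the i-th term of S_theta(t)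
  is <~ t^{-theta/(2 alpha)} z_i/(1+z_i)^2, and z/(1+z)^2 is dominated by the increment of the
  bounded increasing function z/(1+z) from z_i to z_{i+1}; the sum telescopes, so
  S_theta(t) <~ t^{-theta/(2 alpha)} uniformly in r and K.  Integrating over [0,t] gives the factor t.
*)

lemma frac_square_le_telescope:
  fixes z w :: real
  assumes "0 \<le> z" "1 < w"
  shows "z / (1 + z)^2 \<le> w / (w - 1) * (w * z / (1 + w * z) - z / (1 + z))"
proof -
  have pos: "0 < 1 + z" "0 < 1 + w * z"
    using assms by (auto intro: add_pos_nonneg)
  have "w * z / (1 + w * z) - z / (1 + z) = (w - 1) * z / ((1 + w * z) * (1 + z))"
    using pos by (simp add: field_simps)
  then have "w / (w - 1) * (w * z / (1 + w * z) - z / (1 + z)) = w * z / ((1 + w * z) * (1 + z))"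
    using assms by simp
  have "(1 + w * z) * (1 + z) \<le> w * (1 + z)^2"
  proof -
    have "1 + w * z \<le> w * (1 + z)"
      using assms by (simp add: algebra_simps)
    then show ?thesis
      using pos by (simp add: power2_eq_square mult.assoc)
  qed
  have "z / (1 + z)^2 = w * z / (w * (1 + z)^2)"
    using assms by simp
  also have "\<dots> \<le> w * z / ((1 + w * z) * (1 + z))"
    by (rule divide_left_mono) (use \<open>(1 + w * z) * (1 + z) \<le> w * (1 + z)^2\<close> assms pos in auto)
  also have "\<dots> = w / (w - 1) * (w * z / (1 + w * z) - z / (1 + z))"
    using \<open>w / (w - 1) * _ = _\<close> by simp
  finally show ?thesis .
qed

lemma sum_geometric_frac_square_le:
  fixes z w :: real
  assumes "0 \<le> z" "1 < w"
  shows "(\<Sum>i<n. z * w^i / (1 + z * w^i)^2) \<le> w / (w - 1)"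
proof -
  define F where "F i = z * w^i / (1 + z * w^i)" for i
  have F_bounds: "0 \<le> F i" "F i \<le> 1" for i
  proof -
    have "0 \<le> z * w^i"
      using assms by simp
    then show "0 \<le> F i" "F i \<le> 1"
      by (simp_all add: F_def)
  qed
  have "(\<Sum>i<n. z * w^i / (1 + z * w^i)^2) \<le> (\<Sum>i<n. w / (w - 1) * (F (Suc i) - F i))"
  proof (rule sum_mono)
    fix i
    have "0 \<le> z * w^i"
      using assms by simp
    from frac_square_le_telescope[OF this assms(2)]
    show "z * w^i / (1 + z * w^i)^2 \<le> w / (w - 1) * (F (Suc i) - F i)"
      by (simp add: F_def mult.left_commute)
  qed
  also have "\<dots> = w / (w - 1) * (F n - F 0)"
    by (simp only: sum_distrib_left[symmetric] sum_lessThan_telescope)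
  also have "\<dots> \<le> w / (w - 1)"
    using assms F_bounds[of n] F_bounds[of 0] mult_left_mono[of "F n - F 0" 1 "w / (w - 1)"] by simp
  finally show ?thesis .
qed

lemma powr_mult_exp_neg_le:
  fixes a \<kappa> u :: real
  assumes "0 < a" "0 < \<kappa>" "0 \<le> u"
  shows "u powr a * exp (- \<kappa> * u) \<le> (a / \<kappa>) powr a * exp (- a)"
proof -
  have "\<kappa> * u / a \<le> exp (\<kappa> * u / a - 1)"
    using exp_ge_add_one_self[of "\<kappa> * u / a - 1"] by simp
  then have "(\<kappa> * u / a) powr a \<le> exp (\<kappa> * u / a - 1) powr a"
    using assms by (intro powr_mono2) auto
  also have "\<dots> = exp (\<kappa> * u) * exp (- a)"
  proof -
    have "(\<kappa> * u / a - 1) * a = \<kappa> * u - a"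
      using assms by (simp add: field_simps)
    then show ?thesis
      by (simp only: exp_powr_real) (simp add: exp_diff exp_minus divide_inverse)
  qed
  finally have "(\<kappa> / a) powr a * u powr a \<le> exp (\<kappa> * u) * exp (- a)"
    using assms by (simp add: powr_mult powr_divide)
  then have "(\<kappa> / a) powr a * (u powr a * exp (- \<kappa> * u)) \<le> exp (- a)"
    by (simp add: exp_minus field_simps)
  then show ?thesis
    using assms by (simp add: powr_divide field_simps)
qed

lemma powr_mult_exp_neg_le_frac_square:
  fixes p \<kappa> u :: real
  assumes "0 < p" "0 < \<kappa>" "0 \<le> u"
  shows "u powr p * exp (- \<kappa> * u)
    \<le> 2 * (1 + (2 * p / \<kappa>) powr (2 * p) * exp (- (2 * p))) * (u powr p / (1 + u powr p)^2)"
proof -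
  define z where "z = u powr p"
  define D where "D = (2 * p / \<kappa>) powr (2 * p) * exp (- (2 * p))"
  have decay: "(1 + z^2) * exp (- \<kappa> * u) \<le> 1 + D"
  proof -
    have "z^2 = u powr (2 * p)"
      by (simp add: z_def power2_eq_square powr_add[symmetric])
    then have "z^2 * exp (- \<kappa> * u) \<le> D"
      unfolding D_def using powr_mult_exp_neg_le[of "2 * p" \<kappa> u] assms by simp
    moreover have "exp (- \<kappa> * u) \<le> 1"
      using assms by simp
    ultimately show ?thesis
      by (metis add_mono distrib_right mult_1)
  qed
  have "(1 + z)^2 * exp (- \<kappa> * u) \<le> 2 * (1 + z^2) * exp (- \<kappa> * u)"
    using zero_le_power2[of "1 - z"] by (intro mult_right_mono) (simp_all add: power2_sum power2_diff)
  also have "\<dots> \<le> 2 * (1 + D)"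
    using decay by (simp only: mult.assoc mult_le_cancel_left_pos zero_less_numeral)
  finally have bound: "(1 + z)^2 * exp (- \<kappa> * u) \<le> 2 * (1 + D)" .
  have z: "0 \<le> z"
    by (simp add: z_def)
  then have "0 < (1 + z)^2"
    by simp
  have "z * exp (- \<kappa> * u) = z / (1 + z)^2 * ((1 + z)^2 * exp (- \<kappa> * u))"
    using \<open>0 < (1 + z)^2\<close> by simp
  also have "\<dots> \<le> z / (1 + z)^2 * (2 * (1 + D))"
    using bound z by (intro mult_left_mono) auto
  finally show ?thesis
    by (simp add: z_def D_def mult_ac)
qed

lemma heat_weight_le_frac_square:
  fixes \<theta> \<alpha> \<kappa> X t :: real
  assumes "0 < \<theta>" "0 < \<alpha>" "0 < \<kappa>" "0 \<le> X" "0 < t"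
  defines "p \<equiv> \<theta> / (2 * \<alpha>)"
  defines "z \<equiv> X powr \<theta> * t powr p"
  shows "X powr \<theta> * exp (- \<kappa> * X powr (2 * \<alpha>) * t)
    \<le> t powr (- p) * (2 * (1 + (2 * p / \<kappa>) powr (2 * p) * exp (- (2 * p))) * (z / (1 + z)^2))"
proof -
  define u where "u = X powr (2 * \<alpha>) * t"
  have "0 < p"
    using assms by (simp add: p_def)
  have "0 \<le> u"
    using assms by (simp add: u_def)
  moreover have "u powr p = z"
    using assms by (simp add: u_def z_def p_def powr_mult powr_powr)
  ultimately have bound: "z * exp (- \<kappa> * u)
      \<le> 2 * (1 + (2 * p / \<kappa>) powr (2 * p) * exp (- (2 * p))) * (z / (1 + z)^2)"
    using powr_mult_exp_neg_le_frac_square[OF \<open>0 < p\<close> \<open>0 < \<kappa>\<close>] by metis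
  have "X powr \<theta> = t powr (- p) * z"
    using assms by (simp add: z_def powr_minus field_simps)
  then have "X powr \<theta> * exp (- \<kappa> * X powr (2 * \<alpha>) * t) = t powr (- p) * (z * exp (- \<kappa> * u))"
    by (simp add: u_def mult_ac)
  also have "\<dots> \<le> t powr (- p) * (2 * (1 + (2 * p / \<kappa>) powr (2 * p) * exp (- (2 * p))) * (z / (1 + z)^2))"
    using bound by (rule mult_left_mono) simp
  finally show ?thesis .
qed

lemma lacunary_heat_sum_le:
  fixes \<theta> \<alpha> \<kappa> \<rho> :: real
  assumes "0 < \<theta>" "0 < \<alpha>" "0 < \<kappa>" "1 < \<rho>"
  shows "\<exists>C>0. \<forall>X t n. 0 < X \<longrightarrow> 0 < t \<longrightarrow>
    (\<Sum>i<n. (\<rho>^i * X) powr \<theta> * exp (- \<kappa> * (\<rho>^i * X) powr (2 * \<alpha>) * t))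
      \<le> C * t powr (- \<theta> / (2 * \<alpha>))"
proof -
  define p where "p = \<theta> / (2 * \<alpha>)"
  define D where "D = 2 * (1 + (2 * p / \<kappa>) powr (2 * p) * exp (- (2 * p)))"
  define w where "w = \<rho> powr \<theta>"
  have w: "1 < w"
    using assms by (simp add: w_def)
  have D: "0 < D"
    by (simp add: D_def add_pos_nonneg)
  have "(\<Sum>i<n. (\<rho>^i * X) powr \<theta> * exp (- \<kappa> * (\<rho>^i * X) powr (2 * \<alpha>) * t))
      \<le> D * (w / (w - 1)) * t powr (- \<theta> / (2 * \<alpha>))" if "0 < X" "0 < t" for X t n
  proof -
    define z where "z = X powr \<theta> * t powr p"
    have "(\<rho>^i) powr \<theta> = w^i" for i
      using assms by (simp add: w_def powr_power powr_powr powr_realpow[symmetric] mult.commute)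
    then have "(\<rho>^i * X) powr \<theta> * t powr p = z * w^i" for i
      using assms that by (simp add: z_def powr_mult)
    then have term_le: "(\<rho>^i * X) powr \<theta> * exp (- \<kappa> * (\<rho>^i * X) powr (2 * \<alpha>) * t)
        \<le> t powr (- p) * D * (z * w^i / (1 + z * w^i)^2)" for i
      using heat_weight_le_frac_square[of \<theta> \<alpha> \<kappa> "\<rho>^i * X" t] assms that
      by (simp add: p_def D_def mult.assoc)
    have "0 \<le> z"
      by (simp add: z_def)
    have "(\<Sum>i<n. (\<rho>^i * X) powr \<theta> * exp (- \<kappa> * (\<rho>^i * X) powr (2 * \<alpha>) * t))
        \<le> t powr (- p) * D * (\<Sum>i<n. z * w^i / (1 + z * w^i)^2)"
      unfolding sum_distrib_left by (intro sum_mono term_le)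
    also have "\<dots> \<le> t powr (- p) * D * (w / (w - 1))"
      using sum_geometric_frac_square_le[OF \<open>0 \<le> z\<close> w] D by (intro mult_left_mono) auto
    finally show ?thesis
      by (simp add: p_def mult_ac)
  qed
  then show ?thesis
    using D w by (intro exI[of _ "D * (w / (w - 1))"]) auto
qed

lemma norm_zeta_eta: "norm (a *\<^sub>R zeta + b *\<^sub>R eta) = sqrt (a^2 + b^2)"
  by (simp add: norm_eq_sqrt_inner inner_vec_def sum_3 zeta_def eta_def power2_eq_square)

lemma norm_vprime: "norm vprime = 1"
  by (simp add: norm_eq_sqrt_inner inner_vec_def sum_3 vprime_def)

lemma norm_zeta: "norm zeta = 1"
  using norm_zeta_eta[of 1 0] by simp

lemma norm_kvec: "norm (kvec K i) = 2^(i - 1) * real K"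
  by (simp add: kvec_def norm_zeta)

lemma norm_kvec': "norm (kvec' K i) = sqrt (norm (kvec K i)^2 + 1)"
  using norm_zeta_eta[of "2^(i - 1) * real K" 1] by (simp add: kvec_def kvec'_def norm_kvec norm_zeta)

lemma norm_kvec_le_kvec': "norm (kvec K i) \<le> norm (kvec' K i)"
  unfolding norm_kvec' by (rule real_le_rsqrt) simp

lemma norm_kvec'_le:
  assumes "1 \<le> K"
  shows "norm (kvec' K i) \<le> 2 * norm (kvec K i)"
proof -
  have "1 \<le> norm (kvec K i)"
    using assms mult_mono[of 1 "2^(i - 1)" 1 "real K"] by (simp add: norm_kvec)
  then have "1 \<le> norm (kvec K i)^2"
    by (simp add: one_le_power)
  then have "norm (kvec' K i) \<le> sqrt ((2 * norm (kvec K i))^2)"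
    unfolding norm_kvec' by (intro real_sqrt_le_mono) (simp add: power_mult_distrib)
  then show ?thesis
    by (simp only: real_sqrt_abs) simp
qed

lemma kvec_lacunary:
  assumes "1 \<le> i" "i < j"
  shows "2 * norm (kvec K i) \<le> norm (kvec K j)"
proof -
  have "(2::real) * 2^(i - 1) = 2^i"
    using assms(1) by (cases i) auto
  also have "\<dots> \<le> 2^(j - 1)"
    using assms by (intro power_increasing) auto
  finally show ?thesis
    unfolding norm_kvec mult.assoc[symmetric] by (rule mult_right_mono) simp
qed

lemma norm_q1_ge:
  assumes "(i, j) \<in> I1 r"
  shows "max (norm (kvec K i)) (norm (kvec K j)) / 2 \<le> norm (q1 K (i, j))"
proof -
  have "q1 K (i, j) = (2^(j - 1) * real K - 2^(i - 1) * real K) *\<^sub>R zeta + 1 *\<^sub>R eta"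
    by (simp add: q1_def kvec_def kvec'_def algebra_simps)
  then have "norm (q1 K (i, j)) = sqrt ((norm (kvec K j) - norm (kvec K i))^2 + 1^2)"
    by (simp only: norm_zeta_eta norm_kvec)
  then have "\<bar>norm (kvec K j) - norm (kvec K i)\<bar> \<le> norm (q1 K (i, j))"
    by (simp add: real_le_rsqrt)
  moreover have "1 \<le> i" "1 \<le> j" "i \<noteq> j"
    using assms by (auto simp: I1_def)
  then have "2 * norm (kvec K i) \<le> norm (kvec K j) \<or> 2 * norm (kvec K j) \<le> norm (kvec K i)"
    by (meson kvec_lacunary linorder_neqE_nat)
  ultimately show ?thesis
    by (auto simp: max_def)
qed

lemma norm_q2_ge: "max (norm (kvec K i)) (norm (kvec K j)) / 2 \<le> norm (q2 K (i, j))"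
proof -
  have "q2 K (i, j) = (2^(j - 1) * real K + 2^(i - 1) * real K) *\<^sub>R zeta + 1 *\<^sub>R eta"
    by (simp add: q2_def kvec_def kvec'_def algebra_simps)
  then have "norm (q2 K (i, j)) = sqrt ((norm (kvec K j) + norm (kvec K i))^2 + 1^2)"
    by (simp only: norm_zeta_eta norm_kvec)
  then have "norm (kvec K j) + norm (kvec K i) \<le> norm (q2 K (i, j))"
    by (simp add: real_le_rsqrt)
  then show ?thesis
    using norm_ge_zero[of "kvec K i"] norm_ge_zero[of "kvec K j"] by linarith
qed

lemma powr_sum_le_half_max_powr:
  fixes x y n a :: real
  assumes "0 \<le> x" "0 \<le> y" "0 \<le> a" "max x y / 2 \<le> n"
  shows "(x powr a + y powr a) / (2 * 2 powr a) \<le> n powr a"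
proof -
  have "x powr a + y powr a \<le> 2 * max x y powr a"
    using assms powr_mono2[of a x "max x y"] powr_mono2[of a y "max x y"] by simp
  then have "(x powr a + y powr a) / 2 / 2 powr a \<le> max x y powr a / 2 powr a"
    by (intro divide_right_mono) simp_all
  then have "(x powr a + y powr a) / (2 * 2 powr a) \<le> max x y powr a / 2 powr a"
    by (simp add: divide_divide_eq_left)
  also have "\<dots> = (max x y / 2) powr a"
    using assms by (simp add: powr_divide)
  also have "\<dots> \<le> n powr a"
    using assms by (intro powr_mono2) auto
  finally show ?thesis .
qed

lemma heat_mode_le:
  fixes \<kappa> \<alpha> \<theta>1 \<theta>2 x y Y n \<tau> t :: real
  assumes "0 \<le> \<kappa>" "\<kappa> \<le> 1" "0 \<le> \<alpha>" "0 \<le> \<theta>2" "0 \<le> x" "0 \<le> y" "y \<le> Y" "Y \<le> 2 * y"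
    and decay: "\<kappa> * (x powr (2 * \<alpha>) + y powr (2 * \<alpha>)) \<le> n powr (2 * \<alpha>)"
    and "0 \<le> \<tau>" "\<tau> \<le> t"
  shows "exp (- (n powr (2 * \<alpha>)) * (t - \<tau>))
      * (x powr \<theta>1 * Y powr \<theta>2 * exp (- (x powr (2 * \<alpha>) + Y powr (2 * \<alpha>)) * \<tau>))
    \<le> 2 powr \<theta>2 * (x powr \<theta>1 * exp (- \<kappa> * x powr (2 * \<alpha>) * t))
      * (y powr \<theta>2 * exp (- \<kappa> * y powr (2 * \<alpha>) * t))"
proof -
  define a b where "a = x powr (2 * \<alpha>)" and "b = y powr (2 * \<alpha>)"
  have "Y powr \<theta>2 \<le> (2 * y) powr \<theta>2"
    using assms by (intro powr_mono2) auto
  then have Y_powr: "Y powr \<theta>2 \<le> 2 powr \<theta>2 * y powr \<theta>2"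
    using assms by (simp add: powr_mult)
  have "\<kappa> * (a + b) \<le> a + Y powr (2 * \<alpha>)"
  proof -
    have "b \<le> Y powr (2 * \<alpha>)"
      unfolding b_def using assms by (intro powr_mono2) auto
    moreover have "\<kappa> * (a + b) \<le> a + b"
      using assms by (simp add: a_def b_def mult_left_le_one_le)
    ultimately show ?thesis
      by linarith
  qed
  then have "\<kappa> * (a + b) * (t - \<tau>) + \<kappa> * (a + b) * \<tau>
      \<le> n powr (2 * \<alpha>) * (t - \<tau>) + (a + Y powr (2 * \<alpha>)) * \<tau>"
    using decay assms unfolding a_def b_def by (intro add_mono mult_right_mono) auto
  moreover have "\<kappa> * (a + b) * (t - \<tau>) + \<kappa> * (a + b) * \<tau> = \<kappa> * a * t + \<kappa> * b * t"
    by (simp add: algebra_simps)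
  ultimately have exp_le: "exp (- (n powr (2 * \<alpha>)) * (t - \<tau>)) * exp (- (a + Y powr (2 * \<alpha>)) * \<tau>)
      \<le> exp (- \<kappa> * a * t) * exp (- \<kappa> * b * t)"
    unfolding exp_add[symmetric] exp_le_cancel_iff by (simp add: algebra_simps)
  have "exp (- (n powr (2 * \<alpha>)) * (t - \<tau>)) * (x powr \<theta>1 * Y powr \<theta>2 * exp (- (a + Y powr (2 * \<alpha>)) * \<tau>))
      = x powr \<theta>1 * Y powr \<theta>2 * (exp (- (n powr (2 * \<alpha>)) * (t - \<tau>)) * exp (- (a + Y powr (2 * \<alpha>)) * \<tau>))"
    by (simp add: mult_ac)
  also have "\<dots> \<le> x powr \<theta>1 * (2 powr \<theta>2 * y powr \<theta>2) * (exp (- \<kappa> * a * t) * exp (- \<kappa> * b * t))"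
    by (rule mult_mono[OF mult_left_mono[OF Y_powr] exp_le]) auto
  finally show ?thesis
    by (simp add: a_def b_def mult_ac)
qed

definition kvec_heat_sum :: "real \<Rightarrow> real \<Rightarrow> real \<Rightarrow> nat \<Rightarrow> nat \<Rightarrow> real \<Rightarrow> real" where
  "kvec_heat_sum \<theta> \<alpha> \<kappa> K r t =
     (\<Sum>i\<in>{1..r}. norm (kvec K i) powr \<theta> * exp (- \<kappa> * norm (kvec K i) powr (2 * \<alpha>) * t))"

lemma kvec_heat_sum_nonneg: "0 \<le> kvec_heat_sum \<theta> \<alpha> \<kappa> K r t"
  by (simp add: kvec_heat_sum_def sum_nonneg)

lemma kvec_heat_sum_le:
  fixes \<theta> \<alpha> \<kappa> :: real
  assumes "0 < \<theta>" "0 < \<alpha>" "0 < \<kappa>"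
  shows "\<exists>C>0. \<forall>K r t. 1 \<le> K \<longrightarrow> 0 < t \<longrightarrow> kvec_heat_sum \<theta> \<alpha> \<kappa> K r t \<le> C * t powr (- \<theta> / (2 * \<alpha>))"
proof -
  obtain C where "C > 0" and C: "\<And>X t n. 0 < X \<Longrightarrow> 0 < t \<Longrightarrow>
      (\<Sum>i<n. (2^i * X) powr \<theta> * exp (- \<kappa> * (2^i * X) powr (2 * \<alpha>) * t)) \<le> C * t powr (- \<theta> / (2 * \<alpha>))"
    using lacunary_heat_sum_le[OF assms, of 2] by auto
  have "kvec_heat_sum \<theta> \<alpha> \<kappa> K r t \<le> C * t powr (- \<theta> / (2 * \<alpha>))" if "1 \<le> K" "0 < t" for K r t
    using C[of "real K" t r] that by (simp add: kvec_heat_sum_def norm_kvec sum.atLeast1_atMost_eq)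
  then show ?thesis
    using \<open>C > 0\<close> by auto
qed

lemma kvec_heat_sum_product_le:
  fixes \<theta>1 \<theta>2 \<alpha> \<kappa> :: real
  assumes "0 < \<theta>1" "0 < \<theta>2" "0 < \<alpha>" "0 < \<kappa>"
  shows "\<exists>C>0. \<forall>K r t. 1 \<le> K \<longrightarrow> 0 < t \<longrightarrow>
    kvec_heat_sum \<theta>1 \<alpha> \<kappa> K r t * kvec_heat_sum \<theta>2 \<alpha> \<kappa> K r t
      \<le> C * t powr (- (\<theta>1 + \<theta>2) / (2 * \<alpha>))"
proof -
  obtain C1 C2 where C: "C1 > 0" "C2 > 0"
    and C1: "\<And>K r t. 1 \<le> K \<Longrightarrow> 0 < t \<Longrightarrow> kvec_heat_sum \<theta>1 \<alpha> \<kappa> K r t \<le> C1 * t powr (- \<theta>1 / (2 * \<alpha>))"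
    and C2: "\<And>K r t. 1 \<le> K \<Longrightarrow> 0 < t \<Longrightarrow> kvec_heat_sum \<theta>2 \<alpha> \<kappa> K r t \<le> C2 * t powr (- \<theta>2 / (2 * \<alpha>))"
    using kvec_heat_sum_le[OF assms(1,3,4)] kvec_heat_sum_le[OF assms(2,3,4)] by metis
  have "kvec_heat_sum \<theta>1 \<alpha> \<kappa> K r t * kvec_heat_sum \<theta>2 \<alpha> \<kappa> K r t \<le> C1 * C2 * t powr (- (\<theta>1 + \<theta>2) / (2 * \<alpha>))"
    if "1 \<le> K" "0 < t" for K r t
  proof -
    have "kvec_heat_sum \<theta>1 \<alpha> \<kappa> K r t * kvec_heat_sum \<theta>2 \<alpha> \<kappa> K r t
        \<le> C1 * t powr (- \<theta>1 / (2 * \<alpha>)) * (C2 * t powr (- \<theta>2 / (2 * \<alpha>)))"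
      using C C1 C2 that by (intro mult_mono) (auto simp: kvec_heat_sum_nonneg)
    also have "\<dots> = C1 * C2 * t powr (- \<theta>1 / (2 * \<alpha>) + - \<theta>2 / (2 * \<alpha>))"
      by (simp only: powr_add mult_ac)
    also have "\<dots> = C1 * C2 * t powr (- (\<theta>1 + \<theta>2) / (2 * \<alpha>))"
      by (simp add: diff_divide_distrib)
    finally show ?thesis .
  qed
  then show ?thesis
    using C by (intro exI[of _ "C1 * C2"]) auto
qed

lemma abs_heat_Ecoef_le:
  fixes q :: "nat \<times> nat \<Rightarrow> real^3" and \<kappa> \<alpha> \<theta>2 \<tau> t :: real
  assumes "I \<subseteq> {1..r} \<times> {1..r}" "1 \<le> K" "0 \<le> \<kappa>" "\<kappa> \<le> 1" "0 \<le> \<alpha>" "0 \<le> \<theta>2" "0 \<le> \<tau>" "\<tau> \<le> t"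
    and decay: "\<And>i j. (i, j) \<in> I \<Longrightarrow>
      \<kappa> * (norm (kvec K i) powr (2 * \<alpha>) + norm (kvec K j) powr (2 * \<alpha>)) \<le> norm (q (i, j)) powr (2 * \<alpha>)"
  shows "\<bar>frac_heat_sine \<alpha> (t - \<tau>) I (Ecoef \<beta>1 \<beta>2 \<alpha> \<theta>1 \<theta>2 r K \<tau>) q x\<bar>
    \<le> real r powr (- \<beta>1 - \<beta>2) / 2 * 2 powr \<theta>2
      * kvec_heat_sum \<theta>1 \<alpha> \<kappa> K r t * kvec_heat_sum \<theta>2 \<alpha> \<kappa> K r t"
proof -
  define A where "A = real r powr (- \<beta>1 - \<beta>2) / 2"
  define f where "f \<theta> i = norm (kvec K i) powr \<theta> * exp (- \<kappa> * norm (kvec K i) powr (2 * \<alpha>) * t)" for \<theta> i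
  have A: "0 \<le> A"
    by (simp add: A_def)
  have mode_le: "\<bar>exp (- (norm (q p) powr (2 * \<alpha>)) * (t - \<tau>)) * Ecoef \<beta>1 \<beta>2 \<alpha> \<theta>1 \<theta>2 r K \<tau> p * sin (q p \<bullet> x)\<bar>
      \<le> A * (2 powr \<theta>2 * f \<theta>1 (fst p) * f \<theta>2 (snd p))" if "p \<in> I" for p
  proof -
    obtain i j where p: "p = (i, j)"
      by fastforce
    define M where "M = exp (- (norm (q p) powr (2 * \<alpha>)) * (t - \<tau>)) * (norm (kvec K i) powr \<theta>1
      * norm (kvec' K j) powr \<theta>2 * exp (- (norm (kvec K i) powr (2 * \<alpha>) + norm (kvec' K j) powr (2 * \<alpha>)) * \<tau>))"
    have "\<bar>exp (- (norm (q p) powr (2 * \<alpha>)) * (t - \<tau>)) * Ecoef \<beta>1 \<beta>2 \<alpha> \<theta>1 \<theta>2 r K \<tau> p * sin (q p \<bullet> x)\<bar>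
        = A * M * \<bar>sin (q p \<bullet> x)\<bar>"
      by (simp add: p M_def A_def Ecoef_def abs_mult mult_ac)
    also have "\<dots> \<le> A * M"
      using A by (simp add: M_def mult_left_le)
    also have "\<dots> \<le> A * (2 powr \<theta>2 * f \<theta>1 i * f \<theta>2 j)"
      unfolding M_def f_def using assms norm_kvec_le_kvec' norm_kvec'_le decay[of i j] that
      by (intro mult_left_mono A heat_mode_le) (auto simp: p)
    finally show ?thesis
      by (simp add: p)
  qed
  have "\<bar>frac_heat_sine \<alpha> (t - \<tau>) I (Ecoef \<beta>1 \<beta>2 \<alpha> \<theta>1 \<theta>2 r K \<tau>) q x\<bar>
      \<le> (\<Sum>p\<in>I. A * (2 powr \<theta>2 * f \<theta>1 (fst p) * f \<theta>2 (snd p)))"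
    unfolding frac_heat_sine_def sine_series_def by (rule sum_abs[THEN order_trans]) (rule sum_mono[OF mode_le])
  also have "\<dots> \<le> (\<Sum>p\<in>{1..r} \<times> {1..r}. A * (2 powr \<theta>2 * f \<theta>1 (fst p) * f \<theta>2 (snd p)))"
    using assms(1) A by (intro sum_mono2) (auto simp: f_def)
  also have "\<dots> = (\<Sum>i\<in>{1..r}. \<Sum>j\<in>{1..r}. A * (2 powr \<theta>2 * f \<theta>1 i * f \<theta>2 j))"
    by (simp add: sum.cartesian_product case_prod_unfold)
  also have "\<dots> = A * 2 powr \<theta>2 * (\<Sum>i\<in>{1..r}. f \<theta>1 i) * (\<Sum>j\<in>{1..r}. f \<theta>2 j)"
    by (simp add: sum_product sum_distrib_left mult_ac)
  finally show ?thesis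
    by (simp add: A_def f_def kvec_heat_sum_def)
qed

lemma norm_integral_le:
  fixes f :: "real \<Rightarrow> 'a::euclidean_space"
  assumes "\<And>\<tau>. \<tau> \<in> {0..t} \<Longrightarrow> norm (f \<tau>) \<le> B" "0 \<le> B" "0 \<le> t"
  shows "norm (integral {0..t} f) \<le> B * t"
proof (cases "f integrable_on {0..t}")
  case True
  then show ?thesis
    using has_integral_bound_real[OF assms(2) finite.emptyI integrable_integral[OF True]] assms by simp
next
  case False
  then show ?thesis
    using assms by (simp add: not_integrable_integral)
qed

lemma Linf_integral_vprime_le:
  assumes "\<And>\<tau> x. \<tau> \<in> {0..t} \<Longrightarrow> \<bar>f x \<tau>\<bar> \<le> B" "0 \<le> B" "0 \<le> t"
  shows "Linf (\<lambda>x. integral {0..t} (\<lambda>\<tau>. f x \<tau> *\<^sub>R vprime)) \<le> B * t"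
  unfolding Linf_def using assms by (intro cSUP_least norm_integral_le) (auto simp: norm_vprime)

definition decay_rate :: "real \<Rightarrow> real" where
  "decay_rate \<alpha> = 1 / (2 * 2 powr (2 * \<alpha>))"

lemma decay_rate_bounds: "0 \<le> \<alpha> \<Longrightarrow> 0 < decay_rate \<alpha> \<and> decay_rate \<alpha> \<le> 1"
  using ge_one_powr_ge_zero[of 2 "2 * \<alpha>"] by (simp add: decay_rate_def)

lemma decay_rate_le:
  assumes "max (norm (kvec K i)) (norm (kvec K j)) / 2 \<le> n" "0 \<le> \<alpha>"
  shows "decay_rate \<alpha> * (norm (kvec K i) powr (2 * \<alpha>) + norm (kvec K j) powr (2 * \<alpha>)) \<le> n powr (2 * \<alpha>)"
  using powr_sum_le_half_max_powr[OF norm_ge_zero norm_ge_zero _ assms(1)] assms(2)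
  by (simp add: decay_rate_def)

lemma Linf_b11_le:
  assumes "1 \<le> K" "0 < t" "0 \<le> \<alpha>" "0 \<le> \<theta>2"
  shows "Linf (\<lambda>x. b11 \<beta>1 \<beta>2 \<alpha> \<theta>1 \<theta>2 r K x t) \<le> real r powr (- \<beta>1 - \<beta>2) / 2 * 2 powr \<theta>2
    * kvec_heat_sum \<theta>1 \<alpha> (decay_rate \<alpha>) K r t * kvec_heat_sum \<theta>2 \<alpha> (decay_rate \<alpha>) K r t * t"
  unfolding b11_def using assms decay_rate_bounds[of \<alpha>]
  by (intro Linf_integral_vprime_le abs_heat_Ecoef_le decay_rate_le norm_q1_ge)
    (auto simp: I1_def kvec_heat_sum_nonneg)

lemma Linf_b12_le:
  assumes "1 \<le> K" "0 < t" "0 \<le> \<alpha>" "0 \<le> \<theta>2"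
  shows "Linf (\<lambda>x. b12 \<beta>1 \<beta>2 \<alpha> \<theta>1 \<theta>2 r K x t) \<le> real r powr (- \<beta>1 - \<beta>2) / 2 * 2 powr \<theta>2
    * kvec_heat_sum \<theta>1 \<alpha> (decay_rate \<alpha>) K r t * kvec_heat_sum \<theta>2 \<alpha> (decay_rate \<alpha>) K r t * t"
  unfolding b12_def using assms decay_rate_bounds[of \<alpha>]
  by (intro Linf_integral_vprime_le abs_heat_Ecoef_le decay_rate_le norm_q2_ge)
    (auto simp: I2_def kvec_heat_sum_nonneg)

theorem lemma4p5:
  fixes \<beta>1 \<beta>2 \<alpha>2 \<theta>1 \<theta>2 :: real
  assumes "\<beta>1 > 0" "\<beta>2 > 0" "\<alpha>2 > 0" "\<theta>1 > 0" "\<theta>2 > 0"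
  shows "\<exists>C>0. \<forall>(r::nat) (K::nat) (t::real). r \<ge> 1 \<longrightarrow> K \<ge> 1 \<longrightarrow> t > 0 \<longrightarrow>
           Linf (\<lambda>x. b11 \<beta>1 \<beta>2 \<alpha>2 \<theta>1 \<theta>2 r K x t) + Linf (\<lambda>x. b12 \<beta>1 \<beta>2 \<alpha>2 \<theta>1 \<theta>2 r K x t)
             \<le> C * real r powr (- \<beta>1 - \<beta>2) * t powr (1 - (\<theta>1 + \<theta>2) / (2 * \<alpha>2))"
proof -
  define S where "S K r t = kvec_heat_sum \<theta>1 \<alpha>2 (decay_rate \<alpha>2) K r t * kvec_heat_sum \<theta>2 \<alpha>2 (decay_rate \<alpha>2) K r t"
    for K r t
  obtain C where "0 < C" and C: "\<And>K r t. 1 \<le> K \<Longrightarrow> 0 < t \<Longrightarrow> S K r t \<le> C * t powr (- (\<theta>1 + \<theta>2) / (2 * \<alpha>2))"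
    using kvec_heat_sum_product_le[of \<theta>1 \<theta>2 \<alpha>2 "decay_rate \<alpha>2"] assms decay_rate_bounds[of \<alpha>2]
    unfolding S_def by auto
  have "Linf (\<lambda>x. b11 \<beta>1 \<beta>2 \<alpha>2 \<theta>1 \<theta>2 r K x t) + Linf (\<lambda>x. b12 \<beta>1 \<beta>2 \<alpha>2 \<theta>1 \<theta>2 r K x t)
      \<le> 2 powr \<theta>2 * C * real r powr (- \<beta>1 - \<beta>2) * t powr (1 - (\<theta>1 + \<theta>2) / (2 * \<alpha>2))"
    if "1 \<le> K" "0 < t" for r K t
  proof -
    have "Linf (\<lambda>x. b11 \<beta>1 \<beta>2 \<alpha>2 \<theta>1 \<theta>2 r K x t) + Linf (\<lambda>x. b12 \<beta>1 \<beta>2 \<alpha>2 \<theta>1 \<theta>2 r K x t)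
        \<le> real r powr (- \<beta>1 - \<beta>2) * 2 powr \<theta>2 * t * S K r t"
      using add_mono[OF Linf_b11_le[of K t \<alpha>2 \<theta>2 \<beta>1 \<beta>2 \<theta>1 r] Linf_b12_le[of K t \<alpha>2 \<theta>2 \<beta>1 \<beta>2 \<theta>1 r]]
        that assms by (simp add: S_def mult_ac)
    also have "\<dots> \<le> real r powr (- \<beta>1 - \<beta>2) * 2 powr \<theta>2 * t * (C * t powr (- (\<theta>1 + \<theta>2) / (2 * \<alpha>2)))"
      using C that by (intro mult_left_mono) auto
    also have "\<dots> = 2 powr \<theta>2 * C * real r powr (- \<beta>1 - \<beta>2) * (t powr 1 * t powr (- (\<theta>1 + \<theta>2) / (2 * \<alpha>2)))"
      using that by (simp only: powr_one mult_ac)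
    finally show ?thesis
      unfolding powr_add[symmetric] minus_divide_left[symmetric] by simp
  qed
  then show ?thesis
    using \<open>0 < C\<close> by (intro exI[of _ "2 powr \<theta>2 * C"]) auto
qed

end
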